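(* Let $X$ be an exponential vector space over a field $K$. Then: (i) for all $x\in X\smallsetminus X_0$, $x\in L(x)$ and $\uparrow L(x)=L(x)$; (ii) if $x,y\in X\smallsetminus X_0$ and $x\leq y$, then $L(x)\supseteq L(y)$; (iii) if $x=\alpha y+p$ for some $\alpha\in K\smallsetminus\{0\}$, $p\in X_0$ and $y\in X\smallsetminus X_0$, then $L(x)=L(y)$; (iv) $L(x)\cap X_0=\emptyset$ for all $x\in X\smallsetminus X_0$; (v) if $a\in L(b)$ (with $b\in X\smallsetminus X_0$) then $L(a)\subseteq L(b)$; (vi) for any $x,y\in X\smallsetminus X_0$, $L(x)\cap L(y)\neq\emptyset$.
   Context: An exponential vector space (evs) over a field $K$ is a partially ordered set $(X,\leq)$ with a binary operation $+$ on $X$ and a map $K\times X\to X$, $(\alpha,x)\mapsto \alpha x$, such that: (A1) $(X,+)$ is a commutative semigroup with identity $\theta$; (A2) $x\leq y$ implies $x+z\leq y+z$ and $\alpha x\leq \alpha y$ for all $z\in X$, $\alpha\in K$; (A3) $\alpha(x+y)=\alpha x+\alpha y$, $\alpha(\beta x)=(\alpha\beta)x$, $(\alpha+\beta)x\leq \alpha x+\beta x$, $1x=x$; (A4) $\alpha x=\theta$ iff $\alpha=0$ or $x=\theta$; (A5) $x+(-1)x=\theta$ iff $x\in X_0$, where $X_0:=\{z\in X: y\not\leq z \text{ for all } y\in X\smallsetminus\{z\}\}$ (the set of minimal elements, called the primitive space; it is a vector space over $K$); (A6) for each $x\in X$ there is $p\in X_0$ with $p\leq x$. For $x\in X\smallsetminus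 X_0$ let $L(x):=\{z\in X: z\geq \alpha x+p \text{ for some } \alpha\in K\smallsetminus\{0\},\ p\in X_0\}$. For a subset $S\subseteq X$, $\uparrow S:=\{z\in X: z\geq s \text{ for some } s\in S\}$. *)

theory Defs
  imports Main
begin

definition primitive :: "('x \<Rightarrow> 'x \<Rightarrow> bool) \<Rightarrow> 'x set" where
  "primitive le = {z. \<forall>y. y \<noteq> z \<longrightarrow> \<not> le y z}"

definition evs :: "('x \<Rightarrow> 'x \<Rightarrow> bool) \<Rightarrow> ('x \<Rightarrow> 'x \<Rightarrow> 'x) \<Rightarrow> 'x
    \<Rightarrow> ('k::field \<Rightarrow> 'x \<Rightarrow> 'x) \<Rightarrow> bool" where
  "evs le add theta smult \<longleftrightarrow>
     \<comment> \<open>partial order\<close>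
     (\<forall>x. le x x) \<and> (\<forall>x y. le x y \<and> le y x \<longrightarrow> x = y) \<and>
     (\<forall>x y z. le x y \<and> le y z \<longrightarrow> le x z) \<and>
     \<comment> \<open>(A1)\<close>
     (\<forall>x y z. add (add x y) z = add x (add y z)) \<and>
     (\<forall>x y. add x y = add y x) \<and> (\<forall>x. add x theta = x) \<and>
     \<comment> \<open>(A2)\<close>
     (\<forall>x y z. le x y \<longrightarrow> le (add x z) (add y z)) \<and>
     (\<forall>x y a. le x y \<longrightarrow> le (smult a x) (smult a y)) \<and>
     \<comment> \<open>(A3)\<close>
     (\<forall>a x y. smult a (add x y) = add (smult a x) (smult a y)) \<and>
     (\<forall>a b x. smult a (smult b x) = smult (a * b) x) \<and>
     (\<forall>a b x. le (smult (a + b) x) (add (smult a x) (smult b x))) \<and>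
     (\<forall>x. smult 1 x = x) \<and>
     \<comment> \<open>(A4)\<close>
     (\<forall>a x. smult a x = theta \<longleftrightarrow> a = 0 \<or> x = theta) \<and>
     \<comment> \<open>(A5)\<close>
     (\<forall>x. add x (smult (-1) x) = theta \<longleftrightarrow> x \<in> primitive le) \<and>
     \<comment> \<open>(A6)\<close>
     (\<forall>x. \<exists>p \<in> primitive le. le p x)"

definition Lset :: "('x \<Rightarrow> 'x \<Rightarrow> bool) \<Rightarrow> ('x \<Rightarrow> 'x \<Rightarrow> 'x)
    \<Rightarrow> ('k::field \<Rightarrow> 'x \<Rightarrow> 'x) \<Rightarrow> 'x \<Rightarrow> 'x set" where
  "Lset le add smult x =
     {z. \<exists>a p. a \<noteq> (0::'k) \<and> p \<in> primitive le \<and> le (add (smult a x) p) z}"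

definition upset :: "('x \<Rightarrow> 'x \<Rightarrow> bool) \<Rightarrow> 'x set \<Rightarrow> 'x set" where
  "upset le S = {z. \<exists>s\<in>S. le s z}"

end

theory Submission
  imports Defs
begin

text \<open>By (A5) the primitive elements form a subspace: they are exactly the elements
cancelled by their negative, and this property is preserved by sums and scalar multiples.
Hence the maps \<open>z \<mapsto> \<alpha> z + p\<close> with \<open>\<alpha> \<noteq> 0\<close> and \<open>p \<in> X\<^sub>0\<close> form a group of monotone
transformations, and \<open>L(x)\<close> is the up-closure of the orbit of \<open>x\<close>. Composition of
such maps gives (v), inverting them gives (iii), and \<open>x + y\<close> lies above \<open>x + q\<close> and
\<open>y + p\<close> for primitives \<open>p \<le> x\<close>, \<open>q \<le> y\<close>, giving (vi). For (iv), an element below a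
primitive one equals it, which would make \<open>\<alpha> x\<close>, hence \<open>x\<close>, primitive.\<close>

locale exp_vector_space =
  fixes le :: "'x \<Rightarrow> 'x \<Rightarrow> bool" and add :: "'x \<Rightarrow> 'x \<Rightarrow> 'x" and theta :: 'x
    and smult :: "'k::field \<Rightarrow> 'x \<Rightarrow> 'x"
  assumes le_refl: "le x x"
    and le_antisym: "le x y \<Longrightarrow> le y x \<Longrightarrow> x = y"
    and le_trans: "le x y \<Longrightarrow> le y z \<Longrightarrow> le x z"
    and add_assoc: "add (add x y) z = add x (add y z)"
    and add_commute: "add x y = add y x"
    and add_theta: "add x theta = x"
    and add_le_mono: "le x y \<Longrightarrow> le (add x z) (add y z)"
    and smult_le_mono: "le x y \<Longrightarrow> le (smult a x) (smult a y)"
    and smult_add: "smult a (add x y) = add (smult a x) (smult a y)"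
    and smult_smult: "smult a (smult b x) = smult (a * b) x"
    and smult_add_le: "le (smult (a + b) x) (add (smult a x) (smult b x))"
    and smult_one: "smult 1 x = x"
    and smult_eq_theta_iff: "smult a x = theta \<longleftrightarrow> a = 0 \<or> x = theta"
    and add_neg_eq_theta_iff: "add x (smult (-1) x) = theta \<longleftrightarrow> x \<in> primitive le"
    and primitive_le_exists: "\<exists>p \<in> primitive le. le p x"

lemma exp_vector_space_if_evs:
  assumes "evs le add theta smult"
  shows "exp_vector_space le add theta smult"
  using assms unfolding evs_def exp_vector_space_def by (elim conjE) (intro conjI; blast)

context exp_vector_space
begin

abbreviation X0 :: "'x set" where
  "X0 \<equiv> primitive le"

abbreviation L :: "'x \<Rightarrow> 'x set" where
  "L \<equiv> Lset le add smult"

lemma le_primitive_eq: "z \<in> X0 \<Longrightarrow> le y z \<Longrightarrow> y = z"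
  unfolding primitive_def by blast

lemma add_left_commute: "add x (add y z) = add y (add x z)"
  by (metis add_assoc add_commute)

lemma add_le_mono_left: "le x y \<Longrightarrow> le (add z x) (add z y)"
  using add_le_mono add_commute by metis

lemma add_neg_primitive: "p \<in> X0 \<Longrightarrow> add p (smult (-1) p) = theta"
  using add_neg_eq_theta_iff by blast

lemma theta_primitive: "theta \<in> X0"
proof -
  have "smult (-1) theta = theta"
    using smult_eq_theta_iff by blast
  then show ?thesis
    using add_neg_eq_theta_iff add_theta by metis
qed

lemma smult_primitive:
  assumes "p \<in> X0"
  shows "smult a p \<in> X0"
proof -
  have "add (smult a p) (smult (-1) (smult a p)) = smult a (add p (smult (-1) p))"
    by (simp add: smult_add smult_smult mult.commute)
  also have "\<dots> = theta"
    using assms add_neg_primitive smult_eq_theta_iff by simp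
  finally show ?thesis
    using add_neg_eq_theta_iff by blast
qed

lemma add_primitive:
  assumes "p \<in> X0" and "q \<in> X0"
  shows "add p q \<in> X0"
proof -
  have "add (add p q) (smult (-1) (add p q))
      = add (add p (smult (-1) p)) (add q (smult (-1) q))"
    by (simp add: smult_add add_assoc add_left_commute)
  also have "\<dots> = theta"
    using assms by (simp add: add_neg_primitive add_theta)
  finally show ?thesis
    using add_neg_eq_theta_iff by blast
qed

lemma add_primitive_cancel: "p \<in> X0 \<Longrightarrow> add (add x p) (smult (-1) p) = x"
  by (simp add: add_neg_primitive add_assoc add_theta)

lemma LsetI: "a \<noteq> 0 \<Longrightarrow> p \<in> X0 \<Longrightarrow> le (add (smult a x) p) z \<Longrightarrow> z \<in> L x"
  unfolding Lset_def by blast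

lemma LsetE:
  assumes "z \<in> L x"
  obtains a p where "a \<noteq> 0" "p \<in> X0" "le (add (smult a x) p) z"
  using assms unfolding Lset_def by blast

lemma self_mem_Lset: "x \<in> L x"
  using LsetI[OF one_neq_zero theta_primitive] le_refl by (simp add: smult_one add_theta)

lemma upset_Lset: "upset le (L x) = L x"
proof
  show "upset le (L x) \<subseteq> L x"
  proof
    fix z
    assume "z \<in> upset le (L x)"
    then obtain s where "s \<in> L x" "le s z"
      unfolding upset_def by blast
    then show "z \<in> L x"
      by (metis LsetE LsetI le_trans)
  qed
  show "L x \<subseteq> upset le (L x)"
    unfolding upset_def using le_refl by blast
qed

lemma Lset_antimono:
  assumes "le x y"
  shows "L y \<subseteq> L x"
proof
  fix z
  assume "z \<in> L y"
  then obtain a p where "a \<noteq> 0" "p \<in> X0" "le (add (smult a y) p) z"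
    by (rule LsetE)
  moreover have "le (add (smult a x) p) (add (smult a y) p)"
    using assms by (intro add_le_mono smult_le_mono)
  ultimately show "z \<in> L x"
    using LsetI le_trans by blast
qed

lemma Lset_subset_if_mem:
  assumes "y \<in> L x"
  shows "L y \<subseteq> L x"
proof
  fix z
  assume "z \<in> L y"
  then obtain c q where c: "c \<noteq> 0" "q \<in> X0" "le (add (smult c y) q) z"
    by (rule LsetE)
  obtain d p where d: "d \<noteq> 0" "p \<in> X0" "le (add (smult d x) p) y"
    using assms by (rule LsetE)
  have "add (smult (c * d) x) (add (smult c p) q) = add (smult c (add (smult d x) p)) q"
    by (simp add: smult_add smult_smult add_assoc)
  also have "le \<dots> (add (smult c y) q)"
    using d(3) by (intro add_le_mono smult_le_mono)
  finally have "le (add (smult (c * d) x) (add (smult c p) q)) z"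
    using c(3) le_trans by blast
  moreover have "add (smult c p) q \<in> X0"
    using c(2) d(2) by (simp add: add_primitive smult_primitive)
  ultimately show "z \<in> L x"
    using c(1) d(1) by (intro LsetI) simp_all
qed

lemma Lset_smult_add_primitive:
  assumes "a \<noteq> 0" and "p \<in> X0"
  shows "L (add (smult a y) p) = L y"
proof
  show "L (add (smult a y) p) \<subseteq> L y"
    using assms le_refl by (intro Lset_subset_if_mem LsetI)
  have "smult (inverse a) (add (smult a y) p) = add y (smult (inverse a) p)"
    using assms(1) by (simp add: smult_add smult_smult smult_one)
  then have "add (smult (inverse a) (add (smult a y) p)) (smult (-1) (smult (inverse a) p)) = y"
    using add_primitive_cancel smult_primitive assms(2) by simp
  moreover have "smult (-1) (smult (inverse a) p) \<in> X0"
    using assms(2) by (intro smult_primitive)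
  ultimately have "y \<in> L (add (smult a y) p)"
    using assms(1) le_refl by (metis LsetI inverse_nonzero_iff_nonzero)
  then show "L y \<subseteq> L (add (smult a y) p)"
    by (rule Lset_subset_if_mem)
qed

lemma Lset_disjoint_primitive:
  assumes "x \<notin> X0"
  shows "L x \<inter> X0 = {}"
proof (rule ccontr)
  assume "L x \<inter> X0 \<noteq> {}"
  then obtain z where zL: "z \<in> L x" and z: "z \<in> X0"
    by blast
  from zL obtain a p where a: "a \<noteq> 0" "p \<in> X0" "le (add (smult a x) p) z"
    by (rule LsetE)
  have "smult a x = add z (smult (-1) p)"
    using le_primitive_eq[OF z a(3)] add_primitive_cancel[OF a(2)] by metis
  then have "smult (inverse a) (smult a x) \<in> X0"
    using z a(2) by (simp add: add_primitive smult_primitive)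
  then show False
    using a(1) assms by (simp add: smult_smult smult_one)
qed

lemma Lset_inter_nonempty: "L x \<inter> L y \<noteq> {}"
proof -
  obtain p q where "p \<in> X0" "le p y" "q \<in> X0" "le q x"
    using primitive_le_exists by meson
  then have "add x y \<in> L x" "add x y \<in> L y"
    using one_neq_zero add_le_mono_left add_commute
    by (metis LsetI smult_one)+
  then show ?thesis
    by blast
qed

end

theorem mainTheorem15:
  fixes le :: "'x \<Rightarrow> 'x \<Rightarrow> bool" and add :: "'x \<Rightarrow> 'x \<Rightarrow> 'x" and theta :: 'x
    and smult :: "'k::field \<Rightarrow> 'x \<Rightarrow> 'x"
  assumes "evs le add theta smult"
  shows
   "(\<forall>x. x \<notin> primitive le \<longrightarrow>
        x \<in> Lset le add smult x \<and> upset le (Lset le add smult x) = Lset le add smult x)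
    \<and> (\<forall>x y. x \<notin> primitive le \<and> y \<notin> primitive le \<and> le x y \<longrightarrow>
        Lset le add smult y \<subseteq> Lset le add smult x)
    \<and> (\<forall>x y a p. a \<noteq> 0 \<and> p \<in> primitive le \<and> y \<notin> primitive le \<and> x = add (smult a y) p \<longrightarrow>
        Lset le add smult x = Lset le add smult y)
    \<and> (\<forall>x. x \<notin> primitive le \<longrightarrow> Lset le add smult x \<inter> primitive le = {})
    \<and> (\<forall>a b. b \<notin> primitive le \<and> a \<in> Lset le add smult b \<longrightarrow>
        Lset le add smult a \<subseteq> Lset le add smult b)
    \<and> (\<forall>x y. x \<notin> primitive le \<and> y \<notin> primitive le \<longrightarrow>
        Lset le add smult x \<inter> Lset le add smult y \<noteq> {})"
proof -
  interpret exp_vector_space le add theta smult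
    using assms by (rule exp_vector_space_if_evs)
  show ?thesis
    by (simp add: self_mem_Lset upset_Lset Lset_antimono Lset_smult_add_primitive
        Lset_disjoint_primitive Lset_subset_if_mem Lset_inter_nonempty)
qed

end
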